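(* Let $p,q\ge 3$. If there exists a $p$-core of type $(x_1,\dots,x_p)$ and a $q$-core of type $(y_1,\dots,y_q)$, then there exists a $(p+q-1)$-core of type $(x_1,\dots,x_{p-1},x_p+y_1,y_2,\dots,y_q)$.
   Context: For $p\ge 3$, a $p$-core of type $(x_1,\dots,x_p)$ consists of pairwise disjoint finite sets $C_1,\dots,C_p$ (the classes) with $|C_i|=x_i$, together with sets $B_1,\dots,B_p\subseteq C_1\cup\dots\cup C_p$ such that $B_1\cup\dots\cup B_p=C_1\cup\dots\cup C_p$, and: (i) $B_i\cap C_i=\emptyset$ and $|B_i\cap C_j|=1$ for all $j\ne i$ (so $|B_i|=p-1$); (ii) $|B_i\cap B_j|+p$ is odd for all $1\le i,j\le p$. *)

theory Defs
  imports Main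
begin

definition is_core :: "nat \<Rightarrow> (nat \<Rightarrow> nat) \<Rightarrow> (nat \<Rightarrow> 'a set) \<Rightarrow> (nat \<Rightarrow> 'a set) \<Rightarrow> bool" where
  "is_core p x C B \<longleftrightarrow>
     (\<forall>i\<in>{1..p}. finite (C i) \<and> card (C i) = x i) \<and>
     (\<forall>i\<in>{1..p}. \<forall>j\<in>{1..p}. i \<noteq> j \<longrightarrow> C i \<inter> C j = {}) \<and>
     (\<forall>i\<in>{1..p}. B i \<subseteq> (\<Union>k\<in>{1..p}. C k)) \<and>
     (\<Union>i\<in>{1..p}. B i) = (\<Union>k\<in>{1..p}. C k) \<and>
     (\<forall>i\<in>{1..p}. B i \<inter> C i = {}) \<and>
     (\<forall>i\<in>{1..p}. \<forall>j\<in>{1..p}. i \<noteq> j \<longrightarrow> card (B i \<inter> C j) = 1) \<and>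
     (\<forall>i\<in>{1..p}. \<forall>j\<in>{1..p}. odd (card (B i \<inter> B j) + p))"

end

theory Submission
  imports Defs
begin

text \<open>Glue the two cores along a disjoint union. The classes are \<open>C 1, \<dots>, C (p - 1)\<close>,
  the merged class \<open>C p \<uplus> D 1\<close>, and \<open>D 2, \<dots>, D q\<close>; the \<open>i\<close>-th block is
  \<open>B (min i p) \<uplus> B' (i - p + 1)\<close>, so the blocks of the first core are padded with \<open>B' 1\<close>
  (which misses exactly \<open>D 1\<close>) and those of the second core with \<open>B p\<close> (which misses exactly
  \<open>C p\<close>). Each block then meets every other class once and its own class not at all.
  Intersection sizes of blocks add up, and if \<open>a + p\<close> and \<open>b + q\<close> are odd then
  \<open>a + b + (p + q - 1)\<close> is odd. An injection into \<open>nat\<close> transports the glued core.\<close>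

lemma Plus_Int_Plus: "(A <+> B) \<inter> (C <+> D) = (A \<inter> C) <+> (B \<inter> D)"
  by auto

lemma UN_Plus: "(\<Union>i\<in>I. A i <+> B i) = (\<Union>i\<in>I. A i) <+> (\<Union>i\<in>I. B i)"
  by auto

lemma UN_reindex: "f ` I = J \<Longrightarrow> (\<Union>i\<in>I. A (f i)) = (\<Union>j\<in>J. A j)"
  by blast

lemma image_min_atLeastAtMost:
  fixes p n :: nat
  assumes "1 \<le> p" "p \<le> n"
  shows "(\<lambda>i. min i p) ` {1..n} = {1..p}"
proof (intro equalityI subsetI)
  fix j assume "j \<in> {1..p}"
  with assms show "j \<in> (\<lambda>i. min i p) ` {1..n}" by (intro rev_image_eqI[of j]) auto
qed (use assms in auto)

lemma image_shift_atLeastAtMost: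
  fixes p q :: nat
  assumes "1 \<le> p" "1 \<le> q"
  shows "(\<lambda>i. i - p + 1) ` {1..p + q - 1} = {1..q}"
proof (intro equalityI subsetI)
  fix k assume "k \<in> {1..q}"
  with assms show "k \<in> (\<lambda>i. i - p + 1) ` {1..p + q - 1}"
    by (intro rev_image_eqI[of "k + p - 1"]) auto
qed (use assms in auto)

lemma is_core_finite_block:
  assumes "is_core p x C B" "k \<in> {1..p}"
  shows "finite (B k)"
  using assms unfolding is_core_def by (meson finite_UN_I finite_atLeastAtMost finite_subset)

lemma is_core_odd_card_blocks_Int:
  assumes "is_core p x C B" "k \<in> {1..p}" "l \<in> {1..p}"
  shows "odd (card (B k \<inter> B l) + p)"
  using assms unfolding is_core_def by blast

lemma is_core_card_block_Int_class:
  assumes "is_core p x C B" "k \<in> {1..p}" "l \<in> {1..p}"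
  shows "card (B k \<inter> C l) = of_bool (k \<noteq> l)"
  using assms unfolding is_core_def by auto

text \<open>For \<open>i \<le> p\<close> the truncated subtraction makes \<open>i - p + 1 = 1\<close>.\<close>

definition glue_classes :: "nat \<Rightarrow> (nat \<Rightarrow> 'a set) \<Rightarrow> (nat \<Rightarrow> 'b set) \<Rightarrow> nat \<Rightarrow> ('a + 'b) set" where
  "glue_classes p C1 C2 i =
     (if i \<le> p then C1 i else {}) <+> (if p \<le> i then C2 (i - p + 1) else {})"

definition glue_blocks :: "nat \<Rightarrow> (nat \<Rightarrow> 'a set) \<Rightarrow> (nat \<Rightarrow> 'b set) \<Rightarrow> nat \<Rightarrow> ('a + 'b) set" where
  "glue_blocks p B1 B2 i = B1 (min i p) <+> B2 (i - p + 1)"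

lemma UN_glue_classes:
  fixes p q :: nat
  assumes "1 \<le> p" "1 \<le> q"
  shows "(\<Union>i\<in>{1..p + q - 1}. glue_classes p C1 C2 i) = (\<Union>k\<in>{1..p}. C1 k) <+> (\<Union>k\<in>{1..q}. C2 k)"
proof -
  let ?I = "{1..p + q - 1}"
  have "(\<Union>i\<in>?I. if i \<le> p then C1 i else {}) = (\<Union>k\<in>{1..p}. C1 k)"
  proof (intro equalityI subsetI)
    fix z assume "z \<in> (\<Union>k\<in>{1..p}. C1 k)"
    then obtain k where "k \<in> {1..p}" "z \<in> C1 k" by blast
    with assms show "z \<in> (\<Union>i\<in>?I. if i \<le> p then C1 i else {})"
      by (intro UN_I[of k]) auto
  qed (auto split: if_splits)
  moreover have "(\<Union>i\<in>?I. if p \<le> i then C2 (i - p + 1) else {}) = (\<Union>k\<in>{1..q}. C2 k)"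
  proof (intro equalityI subsetI)
    fix z assume "z \<in> (\<Union>k\<in>{1..q}. C2 k)"
    then obtain k where "k \<in> {1..q}" "z \<in> C2 k" by blast
    with assms show "z \<in> (\<Union>i\<in>?I. if p \<le> i then C2 (i - p + 1) else {})"
      by (intro UN_I[of "k + p - 1"]) auto
  qed (use assms in \<open>auto split: if_splits\<close>)
  ultimately show ?thesis
    unfolding glue_classes_def UN_Plus by simp
qed

lemma UN_glue_blocks:
  fixes p q :: nat
  assumes "1 \<le> p" "1 \<le> q"
  shows "(\<Union>i\<in>{1..p + q - 1}. glue_blocks p B1 B2 i) = (\<Union>k\<in>{1..p}. B1 k) <+> (\<Union>k\<in>{1..q}. B2 k)"
proof -
  have "(\<Union>i\<in>{1..p + q - 1}. B1 (min i p)) = (\<Union>k\<in>{1..p}. B1 k)"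
    using assms by (intro UN_reindex image_min_atLeastAtMost) auto
  moreover have "(\<Union>i\<in>{1..p + q - 1}. B2 (i - p + 1)) = (\<Union>k\<in>{1..q}. B2 k)"
    using assms by (intro UN_reindex image_shift_atLeastAtMost) auto
  ultimately show ?thesis
    unfolding glue_blocks_def UN_Plus by simp
qed

lemma card_glue_classes:
  fixes p q :: nat
  assumes c1: "is_core p x C1 B1" and c2: "is_core q y C2 B2"
    and i: "i \<in> {1..p + q - 1}"
  shows "finite (glue_classes p C1 C2 i)"
    and "card (glue_classes p C1 C2 i) =
           (if i < p then x i else if i = p then x p + y 1 else y (i - p + 1))"
proof -
  have left: "finite (C1 i) \<and> card (C1 i) = x i" if "i \<le> p"
    using c1 i that unfolding is_core_def by auto
  have right: "finite (C2 (i - p + 1)) \<and> card (C2 (i - p + 1)) = y (i - p + 1)" if "p \<le> i"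
    using c2 i that unfolding is_core_def by auto
  show "finite (glue_classes p C1 C2 i)"
    using left right unfolding glue_classes_def by auto
  consider "i < p" | "i = p" | "p < i"
    by linarith
  then show "card (glue_classes p C1 C2 i) =
      (if i < p then x i else if i = p then x p + y 1 else y (i - p + 1))"
    by cases (use left right in \<open>auto simp: glue_classes_def card_Plus\<close>)
qed

lemma glue_classes_disjoint:
  fixes p q :: nat
  assumes c1: "is_core p x C1 B1" and c2: "is_core q y C2 B2"
    and "i \<in> {1..p + q - 1}" "j \<in> {1..p + q - 1}" "i \<noteq> j"
  shows "glue_classes p C1 C2 i \<inter> glue_classes p C1 C2 j = {}"
proof -
  have "C1 i \<inter> C1 j = {}" if "i \<le> p" "j \<le> p"
    using c1 assms that unfolding is_core_def by simp
  moreover have "C2 (i - p + 1) \<inter> C2 (j - p + 1) = {}" if "p \<le> i" "p \<le> j"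
  proof -
    have "i - p + 1 \<in> {1..q}" "j - p + 1 \<in> {1..q}" "i - p + 1 \<noteq> j - p + 1"
      using assms that by auto
    then show ?thesis
      using c2 unfolding is_core_def by blast
  qed
  ultimately show ?thesis
    unfolding glue_classes_def Plus_Int_Plus by auto
qed

lemma card_glue_blocks_Int_classes:
  fixes p q :: nat
  assumes c1: "is_core p x C1 B1" and c2: "is_core q y C2 B2" and "1 \<le> p" "1 \<le> q"
    and i: "i \<in> {1..p + q - 1}" and j: "j \<in> {1..p + q - 1}"
  shows "card (glue_blocks p B1 B2 i \<inter> glue_classes p C1 C2 j) = of_bool (i \<noteq> j)"
proof -
  have min_i: "min i p \<in> {1..p}" and shift_i: "i - p + 1 \<in> {1..q}"
    using assms by auto
  have "card (glue_blocks p B1 B2 i \<inter> glue_classes p C1 C2 j) =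
      (if j \<le> p then card (B1 (min i p) \<inter> C1 j) else 0) +
      (if p \<le> j then card (B2 (i - p + 1) \<inter> C2 (j - p + 1)) else 0)"
    using is_core_finite_block[OF c1 min_i] is_core_finite_block[OF c2 shift_i]
    unfolding glue_blocks_def glue_classes_def Plus_Int_Plus by (simp add: card_Plus)
  also have "\<dots> = (if j \<le> p then of_bool (min i p \<noteq> j) else 0) +
      (if p \<le> j then of_bool (i - p + 1 \<noteq> j - p + 1) else 0)"
    using assms min_i shift_i by (auto simp: is_core_card_block_Int_class)
  also have "\<dots> = of_bool (i \<noteq> j)"
    using assms by auto
  finally show ?thesis .
qed

lemma card_glue_blocks_Int:
  fixes p q :: nat
  assumes c1: "is_core p x C1 B1" and c2: "is_core q y C2 B2" and "1 \<le> p" "1 \<le> q"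
    and i: "i \<in> {1..p + q - 1}"
  shows "card (glue_blocks p B1 B2 i \<inter> glue_blocks p B1 B2 j) =
      card (B1 (min i p) \<inter> B1 (min j p)) + card (B2 (i - p + 1) \<inter> B2 (j - p + 1))"
proof -
  have "min i p \<in> {1..p}" and "i - p + 1 \<in> {1..q}"
    using assms by auto
  then show ?thesis
    using is_core_finite_block[OF c1] is_core_finite_block[OF c2]
    unfolding glue_blocks_def Plus_Int_Plus by (simp add: card_Plus)
qed

lemma is_core_glue:
  fixes p q :: nat
  assumes c1: "is_core p x C1 B1" and c2: "is_core q y C2 B2" and p: "1 \<le> p" and q: "1 \<le> q"
  shows "is_core (p + q - 1)
           (\<lambda>i. if i < p then x i else if i = p then x p + y 1 else y (i - p + 1))
           (glue_classes p C1 C2) (glue_blocks p B1 B2)"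
  unfolding is_core_def
proof (intro conjI ballI impI)
  let ?I = "{1..p + q - 1}"
  show blocks_classes: "(\<Union>i\<in>?I. glue_blocks p B1 B2 i) = (\<Union>i\<in>?I. glue_classes p C1 C2 i)"
    using c1 c2 unfolding UN_glue_blocks[OF p q] UN_glue_classes[OF p q] is_core_def by simp
  fix i assume i: "i \<in> ?I"
  show "finite (glue_classes p C1 C2 i)"
    and "card (glue_classes p C1 C2 i) =
           (if i < p then x i else if i = p then x p + y 1 else y (i - p + 1))"
    using card_glue_classes[OF c1 c2 i] by simp_all
  show "glue_blocks p B1 B2 i \<subseteq> (\<Union>k\<in>?I. glue_classes p C1 C2 k)"
    using i unfolding blocks_classes[symmetric] by blast
  show "glue_blocks p B1 B2 i \<inter> glue_classes p C1 C2 i = {}"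
    using card_glue_blocks_Int_classes[OF c1 c2 p q i i] card_glue_classes(1)[OF c1 c2 i]
    by simp
  fix j assume j: "j \<in> ?I"
  show "odd (card (glue_blocks p B1 B2 i \<inter> glue_blocks p B1 B2 j) + (p + q - 1))"
  proof -
    have "min i p \<in> {1..p}" "min j p \<in> {1..p}" "i - p + 1 \<in> {1..q}" "j - p + 1 \<in> {1..q}"
      using i j p q by auto
    then have "odd (card (B1 (min i p) \<inter> B1 (min j p)) + p)"
      and "odd (card (B2 (i - p + 1) \<inter> B2 (j - p + 1)) + q)"
      using is_core_odd_card_blocks_Int[OF c1] is_core_odd_card_blocks_Int[OF c2] by blast+
    then show ?thesis
      using card_glue_blocks_Int[OF c1 c2 p q i] p by simp
  qed
  assume "i \<noteq> j"
  then show "glue_classes p C1 C2 i \<inter> glue_classes p C1 C2 j = {}"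
    and "card (glue_blocks p B1 B2 i \<inter> glue_classes p C1 C2 j) = 1"
    using glue_classes_disjoint[OF c1 c2 i j] card_glue_blocks_Int_classes[OF c1 c2 p q i j]
    by simp_all
qed

lemma is_core_image:
  assumes core: "is_core n x C B" and inj: "inj_on h (\<Union>k\<in>{1..n}. C k)"
  shows "is_core n x (\<lambda>i. h ` C i) (\<lambda>i. h ` B i)"
  unfolding is_core_def
proof (intro conjI ballI impI)
  let ?U = "\<Union>k\<in>{1..n}. C k"
  have C_sub: "C i \<subseteq> ?U" and B_sub: "B i \<subseteq> ?U" if "i \<in> {1..n}" for i
    using core that unfolding is_core_def by blast+
  have image_Int: "h ` (S \<inter> T) = h ` S \<inter> h ` T" if "S \<subseteq> ?U" "T \<subseteq> ?U" for S T
    using inj that by (simp add: inj_on_image_Int)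
  have card_h_image: "card (h ` S) = card S" if "S \<subseteq> ?U" for S
    using inj that by (meson card_image inj_on_subset)
  show "(\<Union>i\<in>{1..n}. h ` B i) = (\<Union>k\<in>{1..n}. h ` C k)"
    using core unfolding is_core_def by (metis image_UN)
  fix i assume i: "i \<in> {1..n}"
  show "finite (h ` C i)" and "card (h ` C i) = x i"
    using core i card_h_image[OF C_sub[OF i]] unfolding is_core_def by auto
  show "h ` B i \<subseteq> (\<Union>k\<in>{1..n}. h ` C k)"
    using B_sub[OF i] by blast
  show "h ` B i \<inter> h ` C i = {}"
    using core i unfolding image_Int[OF B_sub[OF i] C_sub[OF i], symmetric] is_core_def by simp
  fix j assume j: "j \<in> {1..n}"
  show "odd (card (h ` B i \<inter> h ` B j) + n)"
    using is_core_odd_card_blocks_Int[OF core i j]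
    unfolding image_Int[OF B_sub[OF i] B_sub[OF j], symmetric]
      card_h_image[OF le_infI1[OF B_sub[OF i]]] .
  assume "i \<noteq> j"
  then show "h ` C i \<inter> h ` C j = {}"
    using core i j unfolding image_Int[OF C_sub[OF i] C_sub[OF j], symmetric] is_core_def by simp
  show "card (h ` B i \<inter> h ` C j) = 1"
    using is_core_card_block_Int_class[OF core i j] \<open>i \<noteq> j\<close>
    unfolding image_Int[OF B_sub[OF i] C_sub[OF j], symmetric]
      card_h_image[OF le_infI1[OF B_sub[OF i]]] by simp
qed

lemma is_core_nat:
  assumes "is_core n x C B"
  shows "\<exists>C' B' :: nat \<Rightarrow> nat set. is_core n x C' B'"
proof -
  have "finite (\<Union>k\<in>{1..n}. C k)"
    using assms unfolding is_core_def by simp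
  then obtain h :: "'a \<Rightarrow> nat" where "inj_on h (\<Union>k\<in>{1..n}. C k)"
    using finite_imp_inj_to_nat_seg by meson
  from is_core_image[OF assms this] show ?thesis
    by blast
qed

theorem lemma3p4:
  fixes p q :: nat and x y :: "nat \<Rightarrow> nat"
    and C1 B1 :: "nat \<Rightarrow> 'a set" and C2 B2 :: "nat \<Rightarrow> 'b set"
  assumes "p \<ge> 3" and "q \<ge> 3"
    and "is_core p x C1 B1" and "is_core q y C2 B2"
  shows "\<exists>C B :: nat \<Rightarrow> nat set. is_core (p + q - 1)
           (\<lambda>i. if i < p then x i else if i = p then x p + y 1 else y (i - p + 1)) C B"
proof -
  have "is_core (p + q - 1) (\<lambda>i. if i < p then x i else if i = p then x p + y 1 else y (i - p + 1))
      (glue_classes p C1 C2) (glue_blocks p B1 B2)"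
    using is_core_glue[OF assms(3,4)] assms(1,2) by simp
  then show ?thesis
    by (rule is_core_nat)
qed

end
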